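(* Let $m\ge 2$ and $j\in[1,m-1]$ be integers, let $V=\wedge^j\mathbb{C}^m$, let $G$ be the image of $\mathrm{SL}_m(\mathbb{C})$ in $\mathrm{GL}(V)$ under the $j$-th exterior power map, and let $\mathfrak g\subset\mathrm{End}(V)$ be its Lie algebra. Then $G\cap\mathfrak g\neq\emptyset$ (as subsets of $\mathrm{End}(V)$). *)

theory Defs
  imports "Jordan_Normal_Form.DL_Submatrix" "Jordan_Normal_Form.Determinant"
begin

text \<open>Basis of the j-th exterior power of C^m: e_I = e_{i1} wedge ... wedge e_{ij}
  for I a j-subset of {0..<m}, elements taken in increasing order.
  Endomorphisms of that space are represented by their matrices, i.e. functions
  on pairs of basis indices (set to 0 outside the basis index set).\<close>

definition wedge_basis :: "nat \<Rightarrow> nat \<Rightarrow> nat set set" where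
  "wedge_basis m j = {I. I \<subseteq> {..<m} \<and> card I = j}"

definition wedge_mat :: "nat \<Rightarrow> nat \<Rightarrow> complex mat \<Rightarrow> (nat set \<Rightarrow> nat set \<Rightarrow> complex)" where
  "wedge_mat m j A = (\<lambda>I J. if I \<in> wedge_basis m j \<and> J \<in> wedge_basis m j
       then det (submatrix A I J) else 0)"

definition SL_mat :: "nat \<Rightarrow> complex mat set" where
  "SL_mat m = {A. A \<in> carrier_mat m m \<and> det A = 1}"

definition wedge_group :: "nat \<Rightarrow> nat \<Rightarrow> (nat set \<Rightarrow> nat set \<Rightarrow> complex) set" where
  "wedge_group m j = wedge_mat m j ` SL_mat m"

text \<open>Its Lie algebra: the image of sl_m(C) under the differential at the identity of
  the polynomial map A \<mapsto> wedge^j A, i.e. D = d/dt wedge^j(1 + tX) at t = 0.\<close>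
definition wedge_lie_alg :: "nat \<Rightarrow> nat \<Rightarrow> (nat set \<Rightarrow> nat set \<Rightarrow> complex) set" where
  "wedge_lie_alg m j = {D. \<exists>X \<in> carrier_mat m m. (\<Sum>i<m. X $$ (i, i)) = 0 \<and>
     (\<forall>I J. ((\<lambda>t::complex. wedge_mat m j (1\<^sub>m m + t \<cdot>\<^sub>m X) I J) has_field_derivative D I J) (at 0))}"

end

theory Submission
  imports Defs
begin

text \<open>Both G and its Lie algebra contain diagonal elements: the exterior power of
  diag(a) is diag(\<Prod>i\<in>I. a i) and that of the derivative at 1 along diag(x) is
  diag(\<Sum>i\<in>I. x i), the diagonal indexed by the j-subsets I. So it suffices to find
  a with \<Prod>a = 1 and traceless x such that \<Prod>i\<in>I. a i = \<Sum>i\<in>I. x i for every j-subset I.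
  The ansatz a = (\<alpha>, \<beta>, ..., \<beta>), x = (u, v, ..., v) reduces this to
  \<alpha> \<beta>^(m-1) = 1, u + (m-1) v = 0, \<beta>^j = j v and \<alpha> \<beta>^(j-1) = u + (j-1) v,
  which is solved by \<beta>^m = j/(j-m), \<alpha> = (j-m) \<beta>/j, v = \<beta>^j/j, u = -(m-1) v.\<close>

lemma pick_inj_on: "inj_on (pick I) {0..<card I}"
proof (rule linorder_inj_onI)
  fix a b assume "a < b" "b \<in> {0..<card I}"
  then show "pick I a \<noteq> pick I b"
    using pick_mono[of b I a] by simp
qed auto

lemma pick_image:
  assumes "finite I"
  shows "pick I ` {0..<card I} = I"
proof (rule card_subset_eq[OF assms])
  show "pick I ` {0..<card I} \<subseteq> I"
    using pick_in_set by (auto simp del: pick.simps)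
  show "card (pick I ` {0..<card I}) = card I"
    by (simp add: card_image[OF pick_inj_on])
qed

lemma det_mat_diag: "det (mat_diag n f) = prod f {0..<n}"
proof -
  have "upper_triangular (mat_diag n f)"
    by (auto simp: upper_triangular_def mat_diag_def)
  then have "det (mat_diag n f) = prod_list (diag_mat (mat_diag n f))"
    by (rule det_upper_triangular[OF _ mat_diag_dim])
  also have "\<dots> = prod f {0..<n}"
    by (simp add: diag_mat_def mat_diag_def prod.distinct_set_conv_list[symmetric])
  finally show ?thesis .
qed

lemma det_zero_row:
  assumes "A \<in> carrier_mat n n" and "k < n" and "\<And>l. l < n \<Longrightarrow> A $$ (k, l) = 0"
  shows "det A = 0"
proof -
  have "(\<Prod>i = 0..<n. A $$ (i, p i)) = 0" if "p permutes {0..<n}" for p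
    using assms permutes_in_image[OF that] by (intro prod_zero bexI[of _ k]) auto
  then show ?thesis
    by (simp add: det_def'[OF assms(1)])
qed

lemma Collect_less_dim_mat_diag:
  assumes "I \<subseteq> {..<n}"
  shows "{i. i < dim_row (mat_diag n d) \<and> i \<in> I} = I"
    and "{i. i < dim_col (mat_diag n d) \<and> i \<in> I} = I"
  using assms by (auto simp: mat_diag_def)

lemma submatrix_mat_diag_index:
  assumes "I \<subseteq> {..<n}" "J \<subseteq> {..<n}" "a < card I" "b < card J"
  shows "submatrix (mat_diag n d) I J $$ (a, b) =
    (if pick I a = pick J b then d (pick I a) else 0)"
proof -
  have "pick I a < n" "pick J b < n"
    using assms pick_in_set by blast+
  moreover have "submatrix (mat_diag n d) I J $$ (a, b) = mat_diag n d $$ (pick I a, pick J b)"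
    by (rule submatrix_index) (simp_all only: Collect_less_dim_mat_diag assms)
  ultimately show ?thesis
    by (simp add: mat_diag_def)
qed

lemma dim_submatrix_mat_diag:
  assumes "I \<subseteq> {..<n}" "J \<subseteq> {..<n}"
  shows "submatrix (mat_diag n d) I J \<in> carrier_mat (card I) (card J)"
  by (rule carrier_matI) (simp_all only: dim_submatrix Collect_less_dim_mat_diag assms)

lemma det_submatrix_mat_diag:
  assumes I: "I \<subseteq> {..<n}" and J: "J \<subseteq> {..<n}" and card: "card I = card J"
  shows "det (submatrix (mat_diag n d) I J) = (if I = J then prod d I else 0)"
proof (cases "I = J")
  case True
  have "finite I"
    using I by (rule finite_subset) simp
  have "submatrix (mat_diag n d) I I = mat_diag (card I) (d \<circ> pick I)"
  proof (rule eq_matI)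
    fix a b assume "a < dim_row (mat_diag (card I) (d \<circ> pick I))"
      "b < dim_col (mat_diag (card I) (d \<circ> pick I))"
    then show "submatrix (mat_diag n d) I I $$ (a, b) = mat_diag (card I) (d \<circ> pick I) $$ (a, b)"
      using submatrix_mat_diag_index[OF I I, of a b d]
      by (simp add: mat_diag_def inj_on_eq_iff[OF pick_inj_on])
  qed (use dim_submatrix_mat_diag[OF I I, of d] in \<open>auto simp: mat_diag_def\<close>)
  then have "det (submatrix (mat_diag n d) I I) = prod (d \<circ> pick I) {0..<card I}"
    by (simp add: det_mat_diag)
  also have "\<dots> = prod d I"
    using prod.reindex[OF pick_inj_on, of d I] pick_image[OF \<open>finite I\<close>] by simp
  finally show ?thesis
    using True by simp
next
  case False
  have "finite I" "finite J"
    using I J by (auto intro: finite_subset)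
  then have "\<not> I \<subseteq> J"
    using False card card_subset_eq by metis
  then obtain i where "i \<in> I" "i \<notin> J"
    by blast
  define k where "k = card {x \<in> I. x < i}"
  have "pick I k = i"
    unfolding k_def using \<open>i \<in> I\<close> by (rule pick_card_in_set)
  have "{x \<in> I. x < i} \<subset> I"
    using \<open>i \<in> I\<close> by blast
  then have "k < card J"
    unfolding k_def card[symmetric] using \<open>finite I\<close> by (rule psubset_card_mono[rotated])
  have "det (submatrix (mat_diag n d) I J) = 0"
  proof (rule det_zero_row[OF dim_submatrix_mat_diag[OF I J, unfolded card] \<open>k < card J\<close>])
    fix l assume "l < card J"
    then have "pick J l \<in> J"
      by (rule pick_in_set[OF disjI1])
    then show "submatrix (mat_diag n d) I J $$ (k, l) = 0"
      using submatrix_mat_diag_index[OF I J, of k l d] \<open>k < card J\<close> \<open>l < card J\<close>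
        \<open>pick I k = i\<close> \<open>i \<notin> J\<close> card
      by auto
  qed
  then show ?thesis
    using False by simp
qed

lemma wedge_mat_mat_diag:
  "wedge_mat m j (mat_diag m d) =
    (\<lambda>I J. if I \<in> wedge_basis m j \<and> J = I then prod d I else 0)"
  by (intro ext) (auto simp: wedge_mat_def wedge_basis_def det_submatrix_mat_diag)

lemma wedge_mat_mat_diag_in_wedge_group:
  assumes "prod d {..<m} = 1"
  shows "wedge_mat m j (mat_diag m d) \<in> wedge_group m j"
proof -
  have "mat_diag m d \<in> SL_mat m"
    using assms by (simp add: SL_mat_def det_mat_diag atLeast0LessThan)
  then show ?thesis
    unfolding wedge_group_def by (rule imageI)
qed

lemma has_field_derivative_prod_one_plus:
  "((\<lambda>t. \<Prod>i\<in>I. 1 + t * x i) has_field_derivative (\<Sum>i\<in>I. x i)) (at 0)"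
proof -
  have "((\<lambda>t. \<Prod>i\<in>I. 1 + t * x i) has_field_derivative
      (\<Sum>i\<in>I. x i * (\<Prod>k\<in>I - {i}. 1 + 0 * x k))) (at 0)"
    by (rule has_field_derivative_prod) (auto intro!: derivative_eq_intros)
  then show ?thesis
    by simp
qed

lemma diag_sum_in_wedge_lie_alg:
  fixes x :: "nat \<Rightarrow> complex"
  assumes "sum x {..<m} = 0"
  shows "(\<lambda>I J. if I \<in> wedge_basis m j \<and> J = I then sum x I else 0) \<in> wedge_lie_alg m j"
proof -
  have "1\<^sub>m m + t \<cdot>\<^sub>m mat_diag m x = mat_diag m (\<lambda>i. 1 + t * x i)" for t
    by (intro eq_matI) (auto simp: mat_diag_def)
  moreover have "((\<lambda>t. if P then \<Prod>i\<in>I. 1 + t * x i else 0) has_field_derivative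
      (if P then sum x I else 0)) (at 0)" for P I
    by (cases P) (simp_all add: has_field_derivative_prod_one_plus)
  ultimately have "((\<lambda>t. wedge_mat m j (1\<^sub>m m + t \<cdot>\<^sub>m mat_diag m x) I J) has_field_derivative
      (if I \<in> wedge_basis m j \<and> J = I then sum x I else 0)) (at 0)" for I J
    by (simp add: wedge_mat_mat_diag)
  moreover have "(\<Sum>i<m. mat_diag m x $$ (i, i)) = 0"
    using assms by (simp add: mat_diag_def)
  ultimately show ?thesis
    unfolding wedge_lie_alg_def by (blast intro: mat_diag_dim)
qed

lemma prod_if_eq_cases:
  fixes p q :: "'a :: comm_monoid_mult"
  assumes "finite I"
  shows "(\<Prod>i\<in>I. if i = c then p else q) =
    (if c \<in> I then p * q ^ (card I - 1) else q ^ card I)"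
proof -
  have "(\<Prod>i\<in>I - {c}. if i = c then p else q) = (\<Prod>i\<in>I - {c}. q)"
    by (rule prod.cong) auto
  then show ?thesis
    using assms by (cases "c \<in> I") (simp_all add: prod.remove card_Diff_singleton)
qed

lemma sum_if_eq_cases:
  fixes u v :: "'a :: semiring_1"
  assumes "finite I"
  shows "(\<Sum>i\<in>I. if i = c then u else v) =
    (if c \<in> I then u + of_nat (card I - 1) * v else of_nat (card I) * v)"
proof -
  have "(\<Sum>i\<in>I - {c}. if i = c then u else v) = (\<Sum>i\<in>I - {c}. v)"
    by (rule sum.cong) auto
  then show ?thesis
    using assms by (cases "c \<in> I") (simp_all add: sum.remove card_Diff_singleton)
qed

lemma wedge_weights_exist:
  assumes "0 < j" "j < m"
  obtains a x :: "nat \<Rightarrow> complex"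
  where "prod a {..<m} = 1" and "sum x {..<m} = 0"
    and "\<And>I. I \<in> wedge_basis m j \<Longrightarrow> prod a I = sum x I"
proof -
  have j: "of_nat j \<noteq> (0 :: complex)" and jm: "of_nat j - of_nat m \<noteq> (0 :: complex)"
    using assms by simp_all
  then have "{z :: complex. z ^ m = of_nat j / (of_nat j - of_nat m)} \<noteq> {}"
    using card_nth_roots[of "of_nat j / (of_nat j - of_nat m)" m] assms by force
  then obtain \<beta> :: complex where \<beta>: "\<beta> ^ m = of_nat j / (of_nat j - of_nat m)"
    by blast
  define \<alpha> where "\<alpha> = (of_nat j - of_nat m) / of_nat j * \<beta>"
  define v where "v = \<beta> ^ j / of_nat j"
  define u where "u = - of_nat (m - 1) * v"
  define a where "a i = (if i = 0 then \<alpha> else \<beta>)" for i :: nat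
  define x where "x i = (if i = 0 then u else v)" for i :: nat
  show ?thesis
  proof (rule that[of a x])
    have "prod a {..<m} = \<alpha> * \<beta> ^ (m - 1)"
      using assms by (simp add: a_def prod_if_eq_cases)
    also have "\<dots> = (of_nat j - of_nat m) / of_nat j * \<beta> ^ m"
      using assms by (simp add: \<alpha>_def power_eq_if)
    also have "\<dots> = 1"
      using j jm \<beta> by simp
    finally show "prod a {..<m} = 1" .
    show "sum x {..<m} = 0"
      using assms by (simp add: x_def sum_if_eq_cases u_def algebra_simps)
  next
    fix I assume "I \<in> wedge_basis m j"
    then have "finite I" "card I = j"
      by (auto simp: wedge_basis_def intro: finite_subset)
    have "\<alpha> * \<beta> ^ (j - 1) = (of_nat j - of_nat m) * v"
      using assms j by (simp add: \<alpha>_def v_def power_eq_if)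
    also have "\<dots> = u + of_nat (j - 1) * v"
      using assms by (simp add: u_def of_nat_diff algebra_simps)
    finally have "\<alpha> * \<beta> ^ (j - 1) = u + of_nat (j - 1) * v" .
    moreover have "\<beta> ^ j = of_nat j * v"
      using j by (simp add: v_def)
    ultimately show "prod a I = sum x I"
      using \<open>finite I\<close> \<open>card I = j\<close> by (simp add: a_def x_def prod_if_eq_cases sum_if_eq_cases)
  qed
qed

theorem lemma8:
  fixes m j :: nat
  assumes "m \<ge> 2" and "1 \<le> j" and "j \<le> m - 1"
  shows "wedge_group m j \<inter> wedge_lie_alg m j \<noteq> {}"
proof -
  have "0 < j" "j < m"
    using assms by auto
  then obtain a x :: "nat \<Rightarrow> complex" where "prod a {..<m} = 1" "sum x {..<m} = 0"
    and weights: "\<And>I. I \<in> wedge_basis m j \<Longrightarrow> prod a I = sum x I"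
    using wedge_weights_exist by blast
  have "wedge_mat m j (mat_diag m a) =
      (\<lambda>I J. if I \<in> wedge_basis m j \<and> J = I then sum x I else 0)"
    by (simp add: wedge_mat_mat_diag weights cong: if_cong)
  then have "wedge_mat m j (mat_diag m a) \<in> wedge_lie_alg m j"
    using diag_sum_in_wedge_lie_alg[OF \<open>sum x {..<m} = 0\<close>] by simp
  moreover have "wedge_mat m j (mat_diag m a) \<in> wedge_group m j"
    using \<open>prod a {..<m} = 1\<close> by (rule wedge_mat_mat_diag_in_wedge_group)
  ultimately show ?thesis
    by blast
qed

end
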